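(* Let $r>0$ and $A=\mathbb{Z}^r$ with its standard generating set (the standard basis vectors). Then for every $n\in\mathbb{N}$, the number of $\operatorname{Aut}(A)$-orbits of $A$ containing an element of word length at most $n$ is exactly $n+1$.
   Context: Word length of $g$ with respect to a generating set $\Sigma$ is the least $n$ such that $g$ is a product of $n$ elements of $\Sigma\cup\Sigma^{-1}$. *)

theory Defs
  imports "HOL-Analysis.Analysis"
begin

text \<open>A = Z^r is modelled as int ^ 'n for a finite (nonempty) index type 'n, with r = CARD('n) > 0.\<close>

definition std_gens :: "(int ^ 'n) set" where
  "std_gens = {axis i 1 | i. True}"

definition word_length :: "('a::ab_group_add) set \<Rightarrow> 'a \<Rightarrow> nat" where
  "word_length S g = (LEAST n. \<exists>xs. length xs = n \<and> set xs \<subseteq> S \<union> uminus ` S \<and> sum_list xs = g)"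

definition Aut :: "('a::ab_group_add \<Rightarrow> 'a) set" where
  "Aut = {f. bij f \<and> (\<forall>x y. f (x + y) = f x + f y)}"

definition aut_orbit :: "'a::ab_group_add \<Rightarrow> 'a set" where
  "aut_orbit v = {f v | f. f \<in> Aut}"

end

theory Submission
  imports Defs
begin

text \<open>The content of a vector (the gcd of its coordinates) is invariant under automorphisms.
  Euclid's algorithm on the coordinates, realised by elementary transvections, followed by a
  signed coordinate permutation moves every vector to c e_a, with c its content and e_a a fixed
  standard basis vector; so the orbits are classified by their content. The word length is the
  l1 norm, which bounds the content, and d e_a has length d: the orbits meeting the ball of
  radius n are exactly those of content 0, ..., n.\<close>

lemma Aut_iff: "f \<in> Aut \<longleftrightarrow> bij f \<and> Modules.additive f"
  by (simp add: Aut_def Modules.additive_def)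

lemma Aut_id: "id \<in> Aut"
  by (simp add: Aut_def)

lemma Aut_comp: "f \<in> Aut \<Longrightarrow> g \<in> Aut \<Longrightarrow> f \<circ> g \<in> Aut"
  by (auto simp: Aut_def bij_comp)

lemma Aut_inv:
  assumes "f \<in> Aut"
  shows "inv f \<in> Aut"
proof -
  have f: "bij f" "Modules.additive f"
    using assms by (auto simp: Aut_iff)
  have "inv f (x + y) = inv f x + inv f y" for x y
  proof -
    have "f (inv f x + inv f y) = x + y"
      using f by (simp add: additive.add bij_is_surj surj_f_inv_f)
    then show ?thesis
      by (metis f(1) bij_is_inj inv_f_f)
  qed
  then show ?thesis
    using f by (simp add: Aut_def bij_imp_bij_inv)
qed

lemma self_in_aut_orbit: "v \<in> aut_orbit v"
  unfolding aut_orbit_def using Aut_id by (auto intro!: exI[of _ id])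

lemma aut_orbit_apply_subset:
  assumes "g \<in> Aut"
  shows "aut_orbit (g v) \<subseteq> aut_orbit v"
  unfolding aut_orbit_def using Aut_comp[OF _ assms] by (force simp: comp_def)

lemma aut_orbit_apply:
  assumes "g \<in> Aut"
  shows "aut_orbit (g v) = aut_orbit v"
proof
  have "inv g (g v) = v"
    using assms by (simp add: Aut_def bij_is_inj)
  then show "aut_orbit v \<subseteq> aut_orbit (g v)"
    using aut_orbit_apply_subset[OF Aut_inv[OF assms], of "g v"] by simp
qed (rule aut_orbit_apply_subset[OF assms])

lemma additive_vector_scalar_mult:
  fixes f :: "int ^ 'n \<Rightarrow> int ^ 'm"
  assumes "Modules.additive f"
  shows "f (k *s x) = k *s f x"
proof (induction k rule: int_induct[where k = 0])
  case base
  show ?case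
    using additive.zero[OF assms] by simp
next
  case (step1 i)
  then show ?case
    by (simp add: additive.add[OF assms])
next
  case (step2 i)
  then show ?case
    using additive.diff[OF assms, of "i *s x" x] by (simp add: vec_eq_iff algebra_simps)
qed

definition transvection :: "'a::ring_1 \<Rightarrow> 'n \<Rightarrow> 'n \<Rightarrow> 'a ^ 'n \<Rightarrow> 'a ^ 'n" where
  "transvection s i j x = x + axis j (s * x $ i)"

lemma transvection_Aut:
  assumes "i \<noteq> j"
  shows "transvection s i j \<in> Aut"
proof -
  have "transvection s i j \<circ> transvection (- s) i j = id"
       "transvection (- s) i j \<circ> transvection s i j = id"
    using assms by (auto simp: transvection_def axis_def vec_eq_iff)
  then have "bij (transvection s i j)"
    using o_bij by blast
  moreover have "Modules.additive (transvection s i j)"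
    by unfold_locales (simp add: transvection_def vec_eq_iff axis_def algebra_simps)
  ultimately show ?thesis
    by (simp add: Aut_iff)
qed

lemma uminus_Aut: "(uminus :: 'a::ab_group_add \<Rightarrow> 'a) \<in> Aut"
  by (simp add: Aut_def bij_uminus)

lemma permute_coordinates_Aut:
  assumes "bij p"
  shows "(\<lambda>x :: 'a::ab_group_add ^ 'n. \<chi> k. x $ p k) \<in> Aut"
proof -
  have "(\<lambda>x :: 'a ^ 'n. \<chi> k. x $ p k) \<circ> (\<lambda>x. \<chi> k. x $ inv p k) = id"
       "(\<lambda>x :: 'a ^ 'n. \<chi> k. x $ inv p k) \<circ> (\<lambda>x. \<chi> k. x $ p k) = id"
    using assms by (simp_all add: fun_eq_iff vec_eq_iff bij_is_inj bij_is_surj surj_f_inv_f)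
  then show ?thesis
    unfolding Aut_def using o_bij by (auto simp: vec_eq_iff)
qed

lemma uminus_axis: "- axis i c = axis i (- c :: 'a::ab_group_add)"
  by (simp add: axis_def vec_eq_iff)

lemma aut_orbit_axis: "aut_orbit (axis i c :: int ^ 'n) = aut_orbit (axis a \<bar>c\<bar>)"
proof -
  have "aut_orbit (axis i c :: int ^ 'n) = aut_orbit (\<chi> k. axis i c $ Transposition.transpose a i k)"
    by (rule aut_orbit_apply[OF permute_coordinates_Aut[OF bij_transpose], symmetric])
  also have "(\<chi> k. axis i c $ Transposition.transpose a i k) = axis a c"
    by (auto simp: vec_eq_iff axis_def Transposition.transpose_def)
  also have "aut_orbit (axis a c :: int ^ 'n) = aut_orbit (axis a \<bar>c\<bar>)"
  proof (cases "c \<ge> 0")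
    case False
    then have "- axis a c = axis a \<bar>c\<bar>"
      by (simp add: uminus_axis)
    then show ?thesis
      using aut_orbit_apply[OF uminus_Aut, of "axis a c"] by simp
  qed simp
  finally show ?thesis .
qed

definition vec_content :: "int ^ 'n \<Rightarrow> int" where
  "vec_content v = Gcd (range (\<lambda>i. v $ i))"

lemma vec_content_nonneg: "vec_content v \<ge> 0"
  by (simp add: vec_content_def)

lemma vec_content_dvd: "vec_content v dvd v $ i"
  unfolding vec_content_def by (rule Gcd_dvd) simp

lemma dvd_vec_content: "(\<And>i. d dvd v $ i) \<Longrightarrow> d dvd vec_content v"
  unfolding vec_content_def by (rule Gcd_greatest) auto

lemma vec_content_eq_0_iff: "vec_content v = 0 \<longleftrightarrow> v = 0"
  unfolding vec_content_def by (auto simp: vec_eq_iff)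

lemma vec_content_axis: "vec_content (axis i c) = \<bar>c\<bar>"
proof (rule zdvd_antisym_nonneg)
  show "vec_content (axis i c) dvd \<bar>c\<bar>"
    using vec_content_dvd[of "axis i c" i] by simp
  show "\<bar>c\<bar> dvd vec_content (axis i c)"
    by (rule dvd_vec_content) (simp add: axis_def)
qed (simp_all add: vec_content_nonneg)

lemma vec_content_dvd_Aut_image:
  assumes "f \<in> Aut"
  shows "vec_content v dvd vec_content (f v)"
proof (cases "v = 0")
  case True
  moreover have "f 0 = 0"
    using assms additive.zero by (auto simp: Aut_iff)
  ultimately show ?thesis
    by simp
next
  case False
  define k where "k = vec_content v"
  define u where "u = (\<chi> i. v $ i div k)"
  have "v = k *s u"
    using vec_content_dvd[of v] by (simp add: u_def k_def vec_eq_iff)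
  then have "f v = k *s f u"
    using additive_vector_scalar_mult assms by (auto simp: Aut_iff)
  then show ?thesis
    by (auto intro!: dvd_vec_content simp: k_def)
qed

lemma vec_content_Aut:
  assumes "f \<in> Aut"
  shows "vec_content (f v) = vec_content v"
proof (rule zdvd_antisym_nonneg)
  have "inv f (f v) = v"
    using assms by (simp add: Aut_def bij_is_inj)
  then show "vec_content (f v) dvd vec_content v"
    using vec_content_dvd_Aut_image[OF Aut_inv[OF assms], of "f v"] by simp
qed (simp_all add: vec_content_nonneg vec_content_dvd_Aut_image[OF assms])

definition l1_norm :: "int ^ 'n \<Rightarrow> nat" where
  "l1_norm v = (\<Sum>k\<in>UNIV. nat \<bar>v $ k\<bar>)"

lemma l1_norm_eq_0_iff: "l1_norm v = 0 \<longleftrightarrow> v = 0"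
  unfolding l1_norm_def by (simp add: vec_eq_iff)

lemma l1_norm_axis: "l1_norm (axis i c) = nat \<bar>c\<bar>"
  by (simp add: l1_norm_def axis_def if_distrib cong: if_cong)

lemma l1_norm_add: "l1_norm (x + y) \<le> l1_norm x + l1_norm y"
  unfolding l1_norm_def sum.distrib[symmetric] by (rule sum_mono) (simp add: abs_triangle_ineq nat_le_iff)

lemma abs_coordinate_le_l1_norm: "\<bar>v $ i\<bar> \<le> int (l1_norm v)"
proof -
  have "nat \<bar>v $ i\<bar> \<le> l1_norm v"
    unfolding l1_norm_def by (rule member_le_sum) auto
  then show ?thesis
    by linarith
qed

lemma vec_content_le_l1_norm: "vec_content v \<le> int (l1_norm v)"
proof (cases "v = 0")
  case True
  then show ?thesis
    using vec_content_eq_0_iff[of v] by simp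
next
  case False
  then obtain i where "v $ i \<noteq> 0"
    by (auto simp: vec_eq_iff)
  then have "vec_content v \<le> \<bar>v $ i\<bar>"
    using dvd_imp_le_int vec_content_dvd by force
  then show ?thesis
    using abs_coordinate_le_l1_norm by (rule order_trans)
qed

lemma l1_norm_signed_std_gen:
  "x \<in> std_gens \<union> uminus ` std_gens \<Longrightarrow> l1_norm x = 1"
  by (auto simp: std_gens_def uminus_axis l1_norm_axis)

lemma axis_sgn_in_signed_std_gens:
  "c \<noteq> 0 \<Longrightarrow> axis i (sgn c) \<in> std_gens \<union> uminus ` std_gens"
  by (auto simp: std_gens_def uminus_axis sgn_if image_iff)

lemma l1_norm_sum_list_le:
  "set xs \<subseteq> std_gens \<union> uminus ` std_gens \<Longrightarrow> l1_norm (sum_list xs) \<le> length xs"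
proof (induction xs)
  case Nil
  then show ?case
    using l1_norm_eq_0_iff[of 0] by simp
next
  case (Cons x xs)
  then show ?case
    using l1_norm_add[of x "sum_list xs"] l1_norm_signed_std_gen[of x] by simp
qed

lemma word_of_length_l1_norm:
  "\<exists>xs. length xs = l1_norm v \<and> set xs \<subseteq> std_gens \<union> uminus ` std_gens \<and> sum_list xs = v"
proof (induction "l1_norm v" arbitrary: v)
  case 0
  then show ?case
    using l1_norm_eq_0_iff[of v] by simp
next
  case (Suc m)
  then obtain i where i: "v $ i \<noteq> 0"
    using l1_norm_eq_0_iff[of v] by (auto simp: vec_eq_iff)
  define e where "e = axis i (sgn (v $ i))"
  have "l1_norm v = l1_norm (v - e) + 1"
  proof -
    have "nat \<bar>v $ k\<bar> = nat \<bar>(v - e) $ k\<bar> + (if k = i then 1 else 0)" for k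
      using i by (auto simp: e_def axis_def sgn_if)
    then show ?thesis
      unfolding l1_norm_def by (simp add: sum.distrib)
  qed
  then obtain xs where "length xs = m" "set xs \<subseteq> std_gens \<union> uminus ` std_gens" "sum_list xs = v - e"
    using Suc(1)[of "v - e"] Suc(2) by auto
  then show ?case
    using axis_sgn_in_signed_std_gens[OF i] Suc(2) by (intro exI[of _ "e # xs"]) (auto simp: e_def)
qed

lemma word_length_std_gens: "word_length std_gens v = l1_norm v"
proof (rule antisym)
  have word: "\<exists>xs. length xs = l1_norm v \<and> set xs \<subseteq> std_gens \<union> uminus ` std_gens \<and> sum_list xs = v"
    by (rule word_of_length_l1_norm)
  then show "word_length std_gens v \<le> l1_norm v"
    unfolding word_length_def by (rule Least_le)
  from word have "\<exists>n xs. length xs = n \<and> set xs \<subseteq> std_gens \<union> uminus ` std_gens \<and> sum_list xs = v"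
    by blast
  then have "\<exists>xs. length xs = word_length std_gens v \<and> set xs \<subseteq> std_gens \<union> uminus ` std_gens \<and> sum_list xs = v"
    unfolding word_length_def by (rule LeastI_ex)
  then obtain xs where "length xs = word_length std_gens v" "set xs \<subseteq> std_gens \<union> uminus ` std_gens" "sum_list xs = v"
    by blast
  then show "l1_norm v \<le> word_length std_gens v"
    using l1_norm_sum_list_le[of xs] by simp
qed

lemma abs_sub_sgn_mult_less:
  fixes a b :: int
  assumes "a \<noteq> 0" "\<bar>a\<bar> \<le> \<bar>b\<bar>"
  shows "\<bar>b - sgn a * sgn b * a\<bar> < \<bar>b\<bar>"
  using assms by (auto simp: sgn_if)

lemma l1_norm_transvection_less:
  assumes "\<bar>v $ j + s * v $ i\<bar> < \<bar>v $ j\<bar>"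
  shows "l1_norm (transvection s i j v) < l1_norm v"
  unfolding l1_norm_def
proof (rule sum_strict_mono_ex1)
  show "\<forall>k\<in>UNIV. nat \<bar>transvection s i j v $ k\<bar> \<le> nat \<bar>v $ k\<bar>"
    using assms by (auto simp: transvection_def axis_def)
  show "\<exists>k\<in>UNIV. nat \<bar>transvection s i j v $ k\<bar> < nat \<bar>v $ k\<bar>"
    using assms by (intro bexI[of _ j]) (auto simp: transvection_def)
qed simp

lemma aut_orbit_eq_axis_vec_content: "aut_orbit v = aut_orbit (axis a (vec_content v))"
proof (induction "l1_norm v" arbitrary: v rule: less_induct)
  case less
  show ?case
  proof (cases "\<exists>i j. i \<noteq> j \<and> v $ i \<noteq> 0 \<and> v $ j \<noteq> 0")
    case True
    then obtain i j where ij: "i \<noteq> j" "v $ i \<noteq> 0" "\<bar>v $ i\<bar> \<le> \<bar>v $ j\<bar>"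
      by (metis linorder_le_cases)
    define t where "t = transvection (- sgn (v $ i) * sgn (v $ j)) i j"
    have "l1_norm (t v) < l1_norm v"
      unfolding t_def using abs_sub_sgn_mult_less[OF ij(2,3)]
      by (intro l1_norm_transvection_less) simp
    then have "aut_orbit (t v) = aut_orbit (axis a (vec_content (t v)))"
      by (rule less)
    moreover have "t \<in> Aut"
      unfolding t_def using ij(1) by (rule transvection_Aut)
    ultimately show ?thesis
      by (simp add: aut_orbit_apply vec_content_Aut)
  next
    case False
    then obtain i where "\<forall>k. k \<noteq> i \<longrightarrow> v $ k = 0"
      by blast
    then have "v = axis i (v $ i)"
      by (auto simp: vec_eq_iff axis_def)
    then show ?thesis
      by (metis aut_orbit_axis vec_content_axis)
  qed
qed

lemma aut_orbit_eq_iff: "aut_orbit v = aut_orbit w \<longleftrightarrow> vec_content v = vec_content (w :: int ^ 'n)"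
proof
  assume "aut_orbit v = aut_orbit w"
  then have "v \<in> aut_orbit w"
    using self_in_aut_orbit by blast
  then show "vec_content v = vec_content w"
    by (auto simp: aut_orbit_def vec_content_Aut)
next
  assume "vec_content v = vec_content w"
  then show "aut_orbit v = aut_orbit w"
    by (metis aut_orbit_eq_axis_vec_content)
qed

theorem mainTheorem9:
  fixes n :: nat
  shows "card {aut_orbit (v :: int ^ 'r) | v. word_length std_gens v \<le> n} = n + 1"
proof -
  fix a :: 'r
  define orbit where "orbit d = aut_orbit (axis a (int d) :: int ^ 'r)" for d
  have "{aut_orbit (v :: int ^ 'r) | v. word_length std_gens v \<le> n} = orbit ` {..n}"
  proof (intro set_eqI iffI)
    fix X assume "X \<in> {aut_orbit (v :: int ^ 'r) | v. word_length std_gens v \<le> n}"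
    then obtain v :: "int ^ 'r" where "X = aut_orbit v" "l1_norm v \<le> n"
      by (auto simp: word_length_std_gens)
    then have "X = orbit (nat (vec_content v))" "nat (vec_content v) \<le> n"
      using vec_content_le_l1_norm[of v] vec_content_nonneg[of v]
      by (auto simp: orbit_def aut_orbit_eq_iff vec_content_axis)
    then show "X \<in> orbit ` {..n}"
      by blast
  next
    fix X assume "X \<in> orbit ` {..n}"
    then obtain d where "d \<le> n" "X = aut_orbit (axis a (int d))"
      by (auto simp: orbit_def)
    then show "X \<in> {aut_orbit (v :: int ^ 'r) | v. word_length std_gens v \<le> n}"
      by (auto simp: word_length_std_gens l1_norm_axis)
  qed
  moreover have "inj_on orbit {..n}"
    by (rule inj_onI) (simp add: orbit_def aut_orbit_eq_iff vec_content_axis)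
  ultimately show ?thesis
    by (simp add: card_image)
qed

end
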